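(* Let $L\in \mathrm{Gr}(V,m)$. (a) If $L\cap \operatorname{int}(K)\neq\emptyset$, then $\operatorname{dist}(L,\Sigma_m)=\nu(L)$. (b) If $L^\perp\cap \operatorname{int}(K^* )\neq\emptyset$, then $\overline{\operatorname{dist}}(\Sigma_m,L)=\bar\nu(L)$.
   Context: Let $V$ be a finite-dimensional real vector space with inner product $\langle\cdot,\cdot\rangle$, and let $K\subseteq V$ be a regular closed convex cone (closed, convex, pointed, with nonempty interior). Let $\|\cdot\|$ and $|||\cdot|||$ be two (possibly different, not necessarily Euclidean) norms on $V$, with dual norms $\|u\|^*:=\max_{\|x\|=1}\langle u,x\rangle$ and $|||u|||^*:=\max_{|||x|||=1}\langle u,x\rangle$. The dual cone is $K^*:=\{u\in V:\langle u,x\rangle\ge0\ \forall x\in K\}$, and $L^\perp$ denotes the orthogonal complement of a linear subspace $L$. $\mathrm{Gr}(V,m)$ is the set of linear subspaces of $V$ of dimension $m$, where $1\le m<\dim V$. For $L_1,L_2\in\mathrm{Gr}(V,m)$ define $\operatorname{dist}(L_1,L_2):=\max_{x\in L_1,x\neq0}\min_{v\in L_2}\frac{|||x-v|||}{\|x\|}$ and $\overline{\operatorname{dist}}(L_1,L_2):=\max_{x\in L_1,x\neq0}\inf_{v\in L_2,v\neq0}\frac{|||x-v|||}{\|v\|}$. The set of ill-posed subspaces is $\Sigma_m:=\{L\in\mathrm{Gr}(V,m): L\cap K\neq\{0\}\text{ and }L^\perp\cap K^*\neq\{0\}\}$, and $\operatorname{dist}(L,\Sigma_m):=\inf_{\tilde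 L\in\Sigma_m}\operatorname{dist}(L,\tilde L)$, $\overline{\operatorname{dist}}(\Sigma_m,L):=\inf_{\tilde L\in\Sigma_m}\overline{\operatorname{dist}}(\tilde L,L)$. Finally $\nu(L):=\min\{\|y-u\|^*: u\in K^*,\ y\in L^\perp,\ |||u|||^*=1\}$ and $\bar\nu(L):=\min\{|||v-x|||: v\in K,\ x\in L,\ \|x\|=1\}$. *)

theory Defs
  imports "HOL-Analysis.Analysis"
begin

definition is_norm :: "('a::real_vector \<Rightarrow> real) \<Rightarrow> bool" where
  "is_norm N \<longleftrightarrow> (\<forall>x. 0 \<le> N x) \<and> (\<forall>x. N x = 0 \<longleftrightarrow> x = 0) \<and>
     (\<forall>c x. N (c *\<^sub>R x) = \<bar>c\<bar> * N x) \<and> (\<forall>x y. N (x + y) \<le> N x + N y)"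

definition dual_norm :: "('a::real_inner \<Rightarrow> real) \<Rightarrow> 'a \<Rightarrow> real" where
  "dual_norm N u = Sup {u \<bullet> x | x. N x = 1}"

definition regular_cone :: "'a::euclidean_space set \<Rightarrow> bool" where
  "regular_cone K \<longleftrightarrow> closed K \<and> convex K \<and> cone K \<and> K \<inter> uminus ` K = {0} \<and> interior K \<noteq> {}"

definition dual_cone :: "'a::real_inner set \<Rightarrow> 'a set" where
  "dual_cone K = {u. \<forall>x\<in>K. 0 \<le> u \<bullet> x}"

definition orth_comp :: "'a::real_inner set \<Rightarrow> 'a set" where
  "orth_comp L = {y. \<forall>x\<in>L. y \<bullet> x = 0}"

definition Gr :: "nat \<Rightarrow> 'a::euclidean_space set set" where
  "Gr m = {L. subspace L \<and> dim L = m}"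

text \<open>dist(L1,L2) = max_{x in L1, x<>0} min_{v in L2} |||x - v||| / ||x||,
  with N1 = ||.|| and N2 = |||.|||.\<close>
definition sdist :: "('a::real_vector \<Rightarrow> real) \<Rightarrow> ('a \<Rightarrow> real) \<Rightarrow> 'a set \<Rightarrow> 'a set \<Rightarrow> real" where
  "sdist N1 N2 L1 L2 = (SUP x\<in>L1 - {0}. INF v\<in>L2. N2 (x - v) / N1 x)"

definition sdistbar :: "('a::real_vector \<Rightarrow> real) \<Rightarrow> ('a \<Rightarrow> real) \<Rightarrow> 'a set \<Rightarrow> 'a set \<Rightarrow> real" where
  "sdistbar N1 N2 L1 L2 = (SUP x\<in>L1 - {0}. INF v\<in>L2 - {0}. N2 (x - v) / N1 v)"

definition Sigma_ill :: "'a::euclidean_space set \<Rightarrow> nat \<Rightarrow> 'a set set" where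
  "Sigma_ill K m = {L \<in> Gr m. L \<inter> K \<noteq> {0} \<and> orth_comp L \<inter> dual_cone K \<noteq> {0}}"

definition dist_to_Sigma :: "('a::euclidean_space \<Rightarrow> real) \<Rightarrow> ('a \<Rightarrow> real) \<Rightarrow> 'a set \<Rightarrow> nat \<Rightarrow> 'a set \<Rightarrow> real" where
  "dist_to_Sigma N1 N2 K m L = (INF L'\<in>Sigma_ill K m. sdist N1 N2 L L')"

definition distbar_from_Sigma :: "('a::euclidean_space \<Rightarrow> real) \<Rightarrow> ('a \<Rightarrow> real) \<Rightarrow> 'a set \<Rightarrow> nat \<Rightarrow> 'a set \<Rightarrow> real" where
  "distbar_from_Sigma N1 N2 K m L = (INF L'\<in>Sigma_ill K m. sdistbar N1 N2 L' L)"

definition nu :: "('a::euclidean_space \<Rightarrow> real) \<Rightarrow> ('a \<Rightarrow> real) \<Rightarrow> 'a set \<Rightarrow> 'a set \<Rightarrow> real" where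
  "nu N1 N2 K L = Inf {dual_norm N1 (y - u) | u y. u \<in> dual_cone K \<and> y \<in> orth_comp L \<and> dual_norm N2 u = 1}"

definition nubar :: "('a::euclidean_space \<Rightarrow> real) \<Rightarrow> ('a \<Rightarrow> real) \<Rightarrow> 'a set \<Rightarrow> 'a set \<Rightarrow> real" where
  "nubar N1 N2 K L = Inf {N2 (v - x) | v x. v \<in> K \<and> x \<in> L \<and> N1 x = 1}"

end

theory Submission
  imports Defs
begin

text \<open>
  If \<open>L'\<close> is ill-posed, a normalised \<open>u \<in> K\<^sup>* \<inter> L'\<^sup>\<bottom>\<close> satisfies
  \<open>u \<bullet> x \<le> dist(L, L') \<parallel>x\<parallel>\<close> on \<open>L\<close>; by Hahn--Banach the restriction of \<open>u\<close> to \<open>L\<close>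
  extends to a functional \<open>w\<close> of dual norm at most \<open>dist(L, L')\<close>, and \<open>(u, u - w)\<close> is
  feasible for \<open>nu(L)\<close>. Dually, a rescaled nonzero point of \<open>L' \<inter> K\<close> is feasible for \<open>nubar(L)\<close>.

  A nearly optimal feasible pair yields rank-one deformations
  \<open>P\<^sub>t x = x + t (w \<bullet> x) d\<close>, \<open>t \<in> [0, 1]\<close>, injective on \<open>L\<close>, with \<open>P\<^sub>0 L = L\<close> and
  \<open>P\<^sub>1 L\<close> on the other side: in (a) \<open>L\<close> meets \<open>int K\<close> while \<open>P\<^sub>1 L \<subseteq> u\<^sup>\<bottom>\<close> misses it; in (b)
  \<open>L \<inter> K = {0}\<close> while \<open>P\<^sub>1 L\<close> contains a nonzero point of \<open>K\<close>. The times at which \<open>P\<^sub>t L\<close>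
  meets \<open>int K\<close> form a relatively open set contained in the closed set of times at which it
  meets \<open>K - {0}\<close>, so by connectedness of \<open>[0, 1]\<close> some \<open>P\<^sub>t L\<close> touches \<open>K\<close> without
  entering its interior. Separation makes it ill-posed, and \<open>P\<^sub>t x - x\<close> is bounded by the
  objective value of the pair.
\<close>

section \<open>Norms given as functions\<close>

lemma is_normD:
  assumes "is_norm N"
  shows is_norm_nonneg: "0 \<le> N x"
    and is_norm_eq_0_iff: "N x = 0 \<longleftrightarrow> x = 0"
    and is_norm_scaleR: "N (c *\<^sub>R x) = \<bar>c\<bar> * N x"
    and is_norm_triangle: "N (x + y) \<le> N x + N y"
  using assms unfolding is_norm_def by auto

lemma is_norm_pos: "is_norm N \<Longrightarrow> x \<noteq> 0 \<Longrightarrow> 0 < N x"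
  using is_norm_nonneg is_norm_eq_0_iff by (metis less_eq_real_def)

lemma is_norm_0: "is_norm N \<Longrightarrow> N 0 = 0"
  by (simp add: is_norm_eq_0_iff)

lemma is_norm_minus: "is_norm N \<Longrightarrow> N (- x) = N x"
  using is_norm_scaleR[of N "-1" x] by simp

lemma is_norm_diff_le: "is_norm N \<Longrightarrow> N (x - y) \<le> N x + N y"
  using is_norm_triangle[of N x "- y"] is_norm_minus[of N y] by simp

lemma is_norm_normalize: "is_norm N \<Longrightarrow> x \<noteq> 0 \<Longrightarrow> N ((1 / N x) *\<^sub>R x) = 1"
  using is_norm_pos[of N x] by (simp add: is_norm_scaleR)

lemma is_norm_sum_le: "is_norm N \<Longrightarrow> N (sum f A) \<le> (\<Sum>i\<in>A. N (f i))"
  by (induction A rule: infinite_finite_induct)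
     (auto simp: is_norm_0 intro: order_trans[OF is_norm_triangle])

lemma is_norm_le_norm:
  fixes N :: "'a::euclidean_space \<Rightarrow> real"
  assumes N: "is_norm N"
  obtains B where "0 < B" "\<And>x. N x \<le> B * norm x"
proof
  define B where "B = (\<Sum>i\<in>Basis. N i) + 1"
  show "0 < B"
    unfolding B_def using is_norm_nonneg[OF N] by (simp add: add_pos_nonneg sum_nonneg add.commute)
  fix x :: 'a
  have "N x = N (\<Sum>i\<in>Basis. (x \<bullet> i) *\<^sub>R i)" by (simp add: euclidean_representation)
  also have "\<dots> \<le> (\<Sum>i\<in>Basis. N ((x \<bullet> i) *\<^sub>R i))" by (rule is_norm_sum_le[OF N])
  also have "\<dots> = (\<Sum>i\<in>Basis. \<bar>x \<bullet> i\<bar> * N i)" by (simp add: is_norm_scaleR[OF N])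
  also have "\<dots> \<le> (\<Sum>i\<in>Basis. norm x * N i)"
    by (rule sum_mono) (simp add: Basis_le_norm mult_right_mono is_norm_nonneg[OF N])
  also have "\<dots> \<le> B * norm x" by (simp add: B_def sum_distrib_left algebra_simps)
  finally show "N x \<le> B * norm x" .
qed

lemma continuous_on_is_norm:
  fixes N :: "'a::euclidean_space \<Rightarrow> real"
  assumes N: "is_norm N"
  shows "continuous_on S N"
proof -
  obtain B where B: "0 < B" "\<And>x. N x \<le> B * norm x" using is_norm_le_norm[OF N] by blast
  have "\<bar>N x - N y\<bar> \<le> B * dist x y" for x y
    using is_norm_triangle[OF N, of y "x - y"] is_norm_triangle[OF N, of x "y - x"]
      B(2)[of "x - y"] B(2)[of "y - x"] by (auto simp: dist_norm norm_minus_commute)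
  then have "lipschitz_on B UNIV N"
    by (intro lipschitz_onI) (auto simp: dist_real_def less_imp_le[OF B(1)])
  then show ?thesis
    by (rule continuous_on_subset[OF lipschitz_on_continuous_on]) simp
qed

lemma is_norm_ge_norm:
  fixes N :: "'a::euclidean_space \<Rightarrow> real"
  assumes N: "is_norm N"
  obtains c where "0 < c" "\<And>x. c * norm x \<le> N x"
proof -
  obtain x0 :: 'a where x0: "x0 \<in> sphere 0 1" "\<And>y. y \<in> sphere 0 1 \<Longrightarrow> N x0 \<le> N y"
    using continuous_attains_inf[of "sphere 0 1" N] continuous_on_is_norm[OF N] by auto
  have "N x0 * norm x \<le> N x" for x
  proof (cases "x = 0")
    case False
    then have "N x0 \<le> N ((1 / norm x) *\<^sub>R x)" by (intro x0(2)) simp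
    with False show ?thesis by (simp add: is_norm_scaleR[OF N] field_simps)
  qed (simp add: is_norm_0[OF N])
  moreover have "0 < N x0" using x0(1) by (intro is_norm_pos[OF N]) auto
  ultimately show thesis using that by blast
qed

lemma is_norm_le_mult:
  fixes N1 N2 :: "'a::euclidean_space \<Rightarrow> real"
  assumes "is_norm N1" "is_norm N2"
  obtains C where "0 < C" "\<And>x. N2 x \<le> C * N1 x"
proof -
  obtain B where B: "0 < B" "\<And>x. N2 x \<le> B * norm x" using is_norm_le_norm[OF assms(2)] by blast
  obtain c where c: "0 < c" "\<And>x. c * norm x \<le> N1 x" using is_norm_ge_norm[OF assms(1)] by blast
  have "N2 x \<le> (B / c) * N1 x" for x
  proof -
    have "N2 x \<le> B * norm x" by (rule B(2))
    also have "\<dots> \<le> B * (N1 x / c)" using c B(1) by (intro mult_left_mono) (auto simp: field_simps)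
    finally show ?thesis by simp
  qed
  with B(1) c(1) show thesis using that[of "B / c"] by simp
qed

lemma is_norm_exists_unit:
  fixes N :: "'a::euclidean_space \<Rightarrow> real"
  assumes "is_norm N"
  shows "\<exists>x. N x = 1"
proof -
  obtain i :: 'a where "i \<in> Basis" using nonempty_Basis by blast
  then have "i \<noteq> 0" by auto
  then show ?thesis using is_norm_normalize[OF assms] by blast
qed

section \<open>Dual norms\<close>

lemma bdd_above_dual_norm:
  fixes N :: "'a::euclidean_space \<Rightarrow> real"
  assumes N: "is_norm N"
  shows "bdd_above {u \<bullet> x | x. N x = 1}"
proof -
  obtain c where c: "0 < c" "\<And>x. c * norm x \<le> N x" using is_norm_ge_norm[OF N] by blast
  have "u \<bullet> x \<le> norm u / c" if "N x = 1" for x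
  proof -
    have "u \<bullet> x \<le> norm u * norm x" by (rule order_trans[OF abs_ge_self Cauchy_Schwarz_ineq2])
    also have "\<dots> \<le> norm u * (1 / c)"
      using c(2)[of x] that c(1) by (intro mult_left_mono) (auto simp: field_simps)
    finally show ?thesis by simp
  qed
  then show ?thesis unfolding bdd_above_def by blast
qed

lemma inner_le_dual_norm:
  fixes N :: "'a::euclidean_space \<Rightarrow> real"
  assumes "is_norm N" "N x = 1"
  shows "u \<bullet> x \<le> dual_norm N u"
  unfolding dual_norm_def using assms by (intro cSup_upper bdd_above_dual_norm) auto

lemma dual_norm_le:
  fixes N :: "'a::euclidean_space \<Rightarrow> real"
  assumes "is_norm N" "\<And>x. N x = 1 \<Longrightarrow> u \<bullet> x \<le> b"
  shows "dual_norm N u \<le> b"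
  unfolding dual_norm_def using assms is_norm_exists_unit[OF assms(1)] by (intro cSup_least) auto

lemma inner_le_dual_norm_mult:
  fixes N :: "'a::euclidean_space \<Rightarrow> real"
  assumes N: "is_norm N"
  shows "u \<bullet> x \<le> dual_norm N u * N x"
proof (cases "x = 0")
  case False
  have "u \<bullet> ((1 / N x) *\<^sub>R x) \<le> dual_norm N u"
    by (rule inner_le_dual_norm[OF N is_norm_normalize[OF N False]])
  then show ?thesis using is_norm_pos[OF N False] by (simp add: field_simps)
qed (simp add: is_norm_0[OF N])

lemma dual_norm_nonneg:
  fixes N :: "'a::euclidean_space \<Rightarrow> real"
  assumes N: "is_norm N"
  shows "0 \<le> dual_norm N u"
proof -
  obtain x where x: "N x = 1" using is_norm_exists_unit[OF N] by blast
  have "u \<bullet> x \<le> dual_norm N u" "u \<bullet> (- x) \<le> dual_norm N u"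
    using x inner_le_dual_norm[OF N, of "- x" u] by (simp_all add: inner_le_dual_norm[OF N] is_norm_minus[OF N])
  then show ?thesis by simp
qed

lemma dual_norm_approx:
  fixes N :: "'a::euclidean_space \<Rightarrow> real"
  assumes "is_norm N" "0 < e"
  obtains x where "N x = 1" "dual_norm N u - e < u \<bullet> x"
proof -
  have "dual_norm N u - e < Sup {u \<bullet> x | x. N x = 1}" using assms(2) unfolding dual_norm_def by simp
  then show thesis
    using less_cSupE[of _ "{u \<bullet> x | x. N x = 1}"] is_norm_exists_unit[OF assms(1)] that by blast
qed

lemma dual_norm_scaleR:
  fixes N :: "'a::euclidean_space \<Rightarrow> real"
  assumes N: "is_norm N" and c: "0 \<le> c"
  shows "dual_norm N (c *\<^sub>R u) = c * dual_norm N u"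
proof (rule antisym)
  show "dual_norm N (c *\<^sub>R u) \<le> c * dual_norm N u"
    by (rule dual_norm_le[OF N]) (use inner_le_dual_norm[OF N] c in \<open>auto intro: mult_left_mono\<close>)
  show "c * dual_norm N u \<le> dual_norm N (c *\<^sub>R u)"
  proof (cases "c = 0")
    case False
    then have "0 < c" using c by simp
    have "dual_norm N u \<le> dual_norm N (c *\<^sub>R u) / c"
      using inner_le_dual_norm[OF N, of _ "c *\<^sub>R u"] \<open>0 < c\<close>
      by (intro dual_norm_le[OF N]) (simp add: field_simps)
    then show ?thesis using \<open>0 < c\<close> by (simp add: field_simps)
  qed (simp add: dual_norm_nonneg[OF N])
qed

lemma dual_norm_0:
  fixes N :: "'a::euclidean_space \<Rightarrow> real"
  shows "is_norm N \<Longrightarrow> dual_norm N 0 = 0"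
  using dual_norm_scaleR[of N 0 0] by simp

lemma dual_norm_pos:
  fixes N :: "'a::euclidean_space \<Rightarrow> real"
  assumes N: "is_norm N" and "u \<noteq> 0"
  shows "0 < dual_norm N u"
proof -
  have "u \<bullet> ((1 / N u) *\<^sub>R u) \<le> dual_norm N u"
    by (rule inner_le_dual_norm[OF N is_norm_normalize[OF N \<open>u \<noteq> 0\<close>]])
  moreover have "0 < u \<bullet> ((1 / N u) *\<^sub>R u)" using is_norm_pos[OF N \<open>u \<noteq> 0\<close>] \<open>u \<noteq> 0\<close> by simp
  ultimately show ?thesis by linarith
qed

lemma dual_norm_normalize:
  fixes N :: "'a::euclidean_space \<Rightarrow> real"
  assumes "is_norm N" "u \<noteq> 0"
  shows "dual_norm N ((1 / dual_norm N u) *\<^sub>R u) = 1"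
  using dual_norm_scaleR[OF assms(1), of "1 / dual_norm N u" u] dual_norm_pos[OF assms] by simp

lemma abs_inner_le_dual_norm_orth:
  fixes N :: "'a::euclidean_space \<Rightarrow> real"
  assumes N: "is_norm N" and L: "subspace L" and "y \<in> orth_comp L" "x \<in> L"
  shows "\<bar>u \<bullet> x\<bar> \<le> dual_norm N (y - u) * N x"
proof -
  have "y \<bullet> x = 0" "y \<bullet> (- x) = 0" using assms(3,4) subspace_neg[OF L] by (auto simp: orth_comp_def)
  then have "u \<bullet> x = (y - u) \<bullet> (- x)" "- (u \<bullet> x) = (y - u) \<bullet> x" by (simp_all add: inner_diff_left)
  then show ?thesis
    using inner_le_dual_norm_mult[OF N, of "y - u" x] inner_le_dual_norm_mult[OF N, of "y - u" "- x"]
    by (simp add: is_norm_minus[OF N])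
qed

lemma convex_strict_epigraph_is_norm:
  assumes N: "is_norm N" and s: "0 \<le> s"
  shows "convex {(x, r). s * N x < r}"
proof (rule convexI, clarsimp)
  fix x y :: 'a and r q u v :: real
  assume xy: "s * N x < r" "s * N y < q" and uv: "0 \<le> u" "0 \<le> v" "u + v = 1"
  have "s * N (u *\<^sub>R x + v *\<^sub>R y) \<le> u * (s * N x) + v * (s * N y)"
    using mult_left_mono[OF is_norm_triangle[OF N, of "u *\<^sub>R x" "v *\<^sub>R y"] s] uv
    by (simp add: is_norm_scaleR[OF N] algebra_simps)
  also have "\<dots> < u * r + v * q"
  proof -
    have "u * (s * N x) \<le> u * r" "v * (s * N y) \<le> v * q" using xy uv by (auto intro: mult_left_mono)
    moreover have "u * (s * N x) < u * r \<or> v * (s * N y) < v * q"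
      using xy uv by (cases "u = 0") simp_all
    ultimately show ?thesis by linarith
  qed
  finally show "s * N (u *\<^sub>R x + v *\<^sub>R y) < u * r + v * q" .
qed

lemma separate_strict_epigraph_from_graph:
  fixes M :: "'a::euclidean_space set"
  assumes M: "subspace M" and N: "is_norm N" and s: "0 \<le> s"
    and c: "\<And>l. l \<in> M \<Longrightarrow> c \<bullet> l \<le> s * N l"
  obtains a b where "(a, b) \<noteq> 0"
    "\<And>x l r. l \<in> M \<Longrightarrow> s * N x < r \<Longrightarrow> 0 \<le> a \<bullet> x + b * r - a \<bullet> l - b * (c \<bullet> l)"
proof -
  define E where "E = {(x, r). s * N x < r}"
  define G where "G = (\<lambda>l. (l, c \<bullet> l)) ` M"
  have "linear (\<lambda>l. (l, c \<bullet> l))"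
    by (rule linearI) (simp_all add: inner_add_right)
  then have "convex G"
    unfolding G_def by (intro convex_linear_image subspace_imp_convex M)
  moreover have "convex E" unfolding E_def by (rule convex_strict_epigraph_is_norm[OF N s])
  moreover have E_G_disjoint: "0 \<notin> (\<Union>e\<in>E. \<Union>g\<in>G. {e - g})"
  proof
    assume "0 \<in> (\<Union>e\<in>E. \<Union>g\<in>G. {e - g})"
    then obtain l where "l \<in> M" "(l, c \<bullet> l) \<in> E" by (auto simp: G_def)
    with c show False by (force simp: E_def)
  qed
  ultimately obtain p where "p \<noteq> 0" and "\<forall>d\<in>(\<Union>e\<in>E. \<Union>g\<in>G. {e - g}). 0 \<le> p \<bullet> d"
    using separating_hyperplane_set_0[OF convex_differences E_G_disjoint] by blast
  then have p: "\<And>e g. e \<in> E \<Longrightarrow> g \<in> G \<Longrightarrow> 0 \<le> p \<bullet> (e - g)" by blast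
  obtain a b where ab: "p = (a, b)" by fastforce
  show thesis
  proof (rule that)
    show "(a, b) \<noteq> 0" using \<open>p \<noteq> 0\<close> ab by simp
    fix x l r assume "l \<in> M" "s * N x < r"
    then have "(x, r) \<in> E" "(l, c \<bullet> l) \<in> G" by (auto simp: E_def G_def)
    from p[OF this] show "0 \<le> a \<bullet> x + b * r - a \<bullet> l - b * (c \<bullet> l)"
      by (simp add: ab inner_diff_right right_diff_distrib)
  qed
qed

lemma hahn_banach_is_norm:
  fixes M :: "'a::euclidean_space set"
  assumes M: "subspace M" and N: "is_norm N" and s: "0 \<le> s"
    and c: "\<And>l. l \<in> M \<Longrightarrow> c \<bullet> l \<le> s * N l"
  obtains w where "\<And>l. l \<in> M \<Longrightarrow> w \<bullet> l = c \<bullet> l" "\<And>x. w \<bullet> x \<le> s * N x"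
proof -
  obtain a b where "(a, b) \<noteq> 0"
    and sep: "\<And>x l r. l \<in> M \<Longrightarrow> s * N x < r \<Longrightarrow> 0 \<le> a \<bullet> x + b * r - a \<bullet> l - b * (c \<bullet> l)"
    using separate_strict_epigraph_from_graph[OF M N s c] by blast
  have functional: "0 \<le> a \<bullet> x + b * r" if "s * N x < r" for x r
    using sep[OF subspace_0[OF M] that] by simp
  have "0 < b"
  proof -
    have "0 \<le> b" using functional[of 0 1] by (simp add: is_norm_0[OF N])
    moreover have "b \<noteq> 0"
    proof
      assume "b = 0"
      then have "0 \<le> a \<bullet> (- a)" using functional[of "- a" "s * N (- a) + 1"] by simp
      then have "a = 0" by (metis antisym inner_eq_zero_iff inner_ge_zero inner_minus_right neg_0_le_iff_le)
      with \<open>b = 0\<close> \<open>(a, b) \<noteq> 0\<close> show False by (simp add: zero_prod_def)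
    qed
    ultimately show ?thesis by simp
  qed
  define w where "w = (- 1 / b) *\<^sub>R a"
  show thesis
  proof
    fix l assume "l \<in> M"
    define q where "q = a \<bullet> l + b * (c \<bullet> l)"
    have kq: "k * q \<le> b" for k
      using sep[OF subspace_scale[OF M \<open>l \<in> M\<close>, of k], of 0 1] by (simp add: is_norm_0[OF N] q_def algebra_simps)
    then have "q = 0"
      using kq[of "(b + 1) / q"] by (cases "q = 0") simp_all
    then show "w \<bullet> l = c \<bullet> l" using \<open>0 < b\<close> by (simp add: w_def q_def field_simps)
  next
    fix x
    have "w \<bullet> x \<le> s * N x + e" if "0 < e" for e
      using functional[of x "s * N x + e"] that \<open>0 < b\<close> by (simp add: w_def field_simps)
    then show "w \<bullet> x \<le> s * N x" by (rule field_le_epsilon)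
  qed
qed

lemma exists_norming_functional:
  fixes N :: "'a::euclidean_space \<Rightarrow> real"
  assumes N: "is_norm N" and "N x0 = 1"
  obtains w where "w \<bullet> x0 = 1" "\<And>x. \<bar>w \<bullet> x\<bar> \<le> N x"
proof -
  have "x0 \<noteq> 0" using assms is_norm_0[OF N] by auto
  define c where "c = (1 / (x0 \<bullet> x0)) *\<^sub>R x0"
  have "c \<bullet> l \<le> 1 * N l" if l: "l \<in> span {x0}" for l
  proof -
    obtain a where "l = a *\<^sub>R x0" using l by (auto simp: span_singleton)
    then show ?thesis using \<open>x0 \<noteq> 0\<close> \<open>N x0 = 1\<close> by (simp add: c_def is_norm_scaleR[OF N])
  qed
  then obtain w where w: "\<And>l. l \<in> span {x0} \<Longrightarrow> w \<bullet> l = c \<bullet> l" "\<And>x. w \<bullet> x \<le> 1 * N x"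
    using hahn_banach_is_norm[OF subspace_span N, of 1 "{x0}" c] by auto
  have "w \<bullet> x0 = 1" using w(1)[of x0] \<open>x0 \<noteq> 0\<close> by (simp add: span_base c_def)
  moreover have "\<bar>w \<bullet> x\<bar> \<le> N x" for x
    using w(2)[of x] w(2)[of "- x"] by (simp add: is_norm_minus[OF N])
  ultimately show thesis by (rule that)
qed

lemma subspace_eq_hyperplane_if_superset:
  fixes L :: "'a::euclidean_space set"
  assumes "u \<noteq> 0" "subspace L" "dim L < DIM('a)" "{x. u \<bullet> x = 0} \<subseteq> L"
  shows "L = {x. u \<bullet> x = 0}"
  using assms dim_hyperplane[OF assms(1)]
  by (intro subspace_dim_equal[symmetric]) (auto simp: subspace_hyperplane)

lemma exists_level_vector_outside:
  fixes N :: "'a::euclidean_space \<Rightarrow> real"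
  assumes N: "is_norm N" and u: "dual_norm N u = 1" and L: "subspace L" "dim L < DIM('a)" and "0 < e"
  obtains z where "u \<bullet> z = 1" "N z \<le> 1 + e" "z \<notin> L"
proof -
  have "u \<noteq> 0" using u dual_norm_0[OF N] by auto
  obtain x where x: "N x = 1" "1 - e / (1 + e) < u \<bullet> x"
    using dual_norm_approx[OF N, of "e / (1 + e)" u] u \<open>0 < e\<close> by auto
  have "1 / (1 + e) < u \<bullet> x" using x(2) \<open>0 < e\<close> by (simp add: field_simps)
  moreover have "0 < 1 / (1 + e)" using \<open>0 < e\<close> by simp
  ultimately have ux: "0 < u \<bullet> x" by linarith
  have "1 < (1 + e) * (u \<bullet> x)"
    using \<open>1 / (1 + e) < u \<bullet> x\<close> \<open>0 < e\<close> by (simp add: divide_less_eq mult.commute)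
  with ux have ux: "0 < u \<bullet> x" "1 / (u \<bullet> x) < 1 + e" by (simp_all add: divide_less_eq)
  define z1 where "z1 = (1 / (u \<bullet> x)) *\<^sub>R x"
  have z1: "u \<bullet> z1 = 1" "N z1 < 1 + e" using ux x(1) by (simp_all add: z1_def is_norm_scaleR[OF N])
  show thesis
  proof (cases "z1 \<in> L")
    case True
    have "L \<noteq> {x. u \<bullet> x = 0}" using True z1(1) by auto
    then obtain y where y: "u \<bullet> y = 0" "y \<notin> L"
      using subspace_eq_hyperplane_if_superset[OF \<open>u \<noteq> 0\<close> L] by blast
    define \<eta> where "\<eta> = (1 + e - N z1) / (N y + 1)"
    have \<eta>: "0 < \<eta>" "\<eta> * N y \<le> 1 + e - N z1"
      using z1(2) is_norm_nonneg[OF N, of y] by (auto simp: \<eta>_def field_simps)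
    have "u \<bullet> (z1 + \<eta> *\<^sub>R y) = 1" using z1(1) y(1) by (simp add: inner_add_right)
    moreover have "N (z1 + \<eta> *\<^sub>R y) \<le> 1 + e"
      using is_norm_triangle[OF N, of z1 "\<eta> *\<^sub>R y"] \<eta> by (simp add: is_norm_scaleR[OF N])
    moreover have "z1 + \<eta> *\<^sub>R y \<notin> L"
    proof
      assume "z1 + \<eta> *\<^sub>R y \<in> L"
      then have "(1 / \<eta>) *\<^sub>R ((z1 + \<eta> *\<^sub>R y) - z1) \<in> L"
        using True L(1) by (intro subspace_scale subspace_diff) auto
      with y(2) \<eta>(1) show False by simp
    qed
    ultimately show thesis by (rule that)
  qed (use z1 that in auto)
qed

section \<open>Cones and ill-posed subspaces\<close>

lemma zero_notin_interior_regular_cone: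
  fixes K :: "'a::euclidean_space set"
  assumes "regular_cone K"
  shows "0 \<notin> interior K"
proof
  assume "0 \<in> interior K"
  then obtain r where r: "0 < r" "ball 0 r \<subseteq> K" using mem_interior by blast
  obtain i :: 'a where i: "i \<in> Basis" using nonempty_Basis by blast
  define x where "x = (r / 2) *\<^sub>R i"
  have "x \<in> K" "- x \<in> K" using r i by (auto simp: x_def subset_iff)
  then have "x \<in> K \<inter> uminus ` K" by (metis IntI image_eqI minus_minus)
  then have "x = 0" using assms unfolding regular_cone_def by blast
  then show False using r(1) i by (auto simp: x_def)
qed

lemma zero_mem_regular_cone:
  assumes "regular_cone K"
  shows "0 \<in> K"
proof -
  have "cone K" "interior K \<noteq> {}" using assms by (auto simp: regular_cone_def)
  then obtain k where "k \<in> K" using interior_subset by blast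
  with \<open>cone K\<close> show ?thesis unfolding cone_def by (metis scaleR_zero_left order_refl)
qed

lemma inner_pos_interior:
  fixes u :: "'a::euclidean_space"
  assumes "\<And>v. v \<in> C \<Longrightarrow> 0 \<le> u \<bullet> v" "u \<noteq> 0" "p \<in> interior C"
  shows "0 < u \<bullet> p"
proof -
  obtain r where r: "0 < r" "ball p r \<subseteq> C" using assms(3) mem_interior by blast
  define q where "q = p - (r / 2 / norm u) *\<^sub>R u"
  have "q \<in> C" using r assms(2) by (intro subsetD[OF r(2)]) (simp add: q_def dist_norm)
  then have "0 \<le> u \<bullet> q" by (rule assms(1))
  also have "u \<bullet> q = u \<bullet> p - r / 2 * norm u"
    using assms(2) by (simp add: q_def inner_diff_right dot_square_norm power2_eq_square)
  finally have "r / 2 * norm u \<le> u \<bullet> p" by simp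
  moreover have "0 < r / 2 * norm u" using r(1) assms(2) by simp
  ultimately show ?thesis by linarith
qed

lemma subspace_disjoint_interior_imp_dual_cone:
  fixes M K :: "'a::euclidean_space set"
  assumes M: "subspace M" and K: "convex K" "interior K \<noteq> {}" and disj: "M \<inter> interior K = {}"
  obtains a where "a \<noteq> 0" "a \<in> orth_comp M" "a \<in> dual_cone K"
proof -
  have "convex (\<Union>x\<in>interior K. \<Union>y\<in>M. {x - y})"
    by (intro convex_differences convex_interior K(1) subspace_imp_convex M)
  moreover have "0 \<notin> (\<Union>x\<in>interior K. \<Union>y\<in>M. {x - y})" using disj by auto
  ultimately obtain a where "a \<noteq> 0" "\<forall>d\<in>(\<Union>x\<in>interior K. \<Union>y\<in>M. {x - y}). 0 \<le> a \<bullet> d"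
    by (rule exE[OF separating_hyperplane_set_0]) blast
  then have a: "a \<noteq> 0" "\<And>x y. x \<in> interior K \<Longrightarrow> y \<in> M \<Longrightarrow> 0 \<le> a \<bullet> (x - y)" by blast+
  obtain k where k: "k \<in> interior K" using K(2) by blast
  have "a \<bullet> l = 0" if "l \<in> M" for l
  proof (rule ccontr)
    assume "a \<bullet> l \<noteq> 0"
    then have "a \<bullet> (k - ((a \<bullet> k + 1) / (a \<bullet> l)) *\<^sub>R l) = -1" by (simp add: inner_diff_right)
    moreover have "((a \<bullet> k + 1) / (a \<bullet> l)) *\<^sub>R l \<in> M" using M that by (rule subspace_scale)
    ultimately show False using a(2)[OF k] by fastforce
  qed
  then have "a \<in> orth_comp M" by (simp add: orth_comp_def)
  have "interior K \<subseteq> {x. 0 \<le> a \<bullet> x}" using a(2)[of _ 0] subspace_0[OF M] by auto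
  then have "closure (interior K) \<subseteq> {x. 0 \<le> a \<bullet> x}"
    by (intro closure_minimal) (auto intro: closed_halfspace_ge[of 0 a, simplified])
  then have "a \<in> dual_cone K"
    using convex_closure_interior[OF K] closure_subset unfolding dual_cone_def by blast
  with a(1) \<open>a \<in> orth_comp M\<close> show thesis by (rule that)
qed

lemma dual_cone_nontrivial:
  fixes K :: "'a::euclidean_space set"
  assumes "regular_cone K"
  obtains a where "a \<noteq> 0" "a \<in> dual_cone K"
proof -
  have "{0} \<inter> interior K = {}" using zero_notin_interior_regular_cone[OF assms] by auto
  moreover have "convex K" "interior K \<noteq> {}" using assms by (auto simp: regular_cone_def)
  ultimately show thesis
    using subspace_disjoint_interior_imp_dual_cone[OF subspace_single_0] that by blast
qed

lemma inter_cone_trivial_if_orth_meets_interior_dual: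
  fixes K L :: "'a::euclidean_space set"
  assumes y: "y \<in> orth_comp L" "y \<in> interior (dual_cone K)" and "x \<in> L" "x \<in> K"
  shows "x = 0"
proof (rule ccontr)
  assume "x \<noteq> 0"
  have "0 \<le> x \<bullet> u" if "u \<in> dual_cone K" for u
    using that \<open>x \<in> K\<close> inner_commute[of x u] by (simp add: dual_cone_def)
  then have "0 < x \<bullet> y" using inner_pos_interior \<open>x \<noteq> 0\<close> y(2) by blast
  moreover have "y \<bullet> x = 0" using y(1) \<open>x \<in> L\<close> by (simp add: orth_comp_def)
  ultimately show False by (simp add: inner_commute)
qed

lemma Gr_obtain_nonzero:
  assumes "L \<in> Gr m" "1 \<le> m"
  obtains x where "x \<in> L" "x \<noteq> 0"
proof -
  have "\<not> L \<subseteq> {0}" using assms dim_subset[of L "{0}"] by (auto simp: Gr_def)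
  then show thesis using that by blast
qed

lemma linear_image_Gr:
  assumes f: "linear f" and L: "L \<in> Gr m" and inj: "\<And>x. x \<in> L \<Longrightarrow> f x = 0 \<Longrightarrow> x = 0"
  shows "f ` L \<in> Gr m"
proof -
  have "subspace L" "dim L = m" using L unfolding Gr_def by auto
  moreover have "inj_on f (span L)"
    unfolding span_eq_iff[THEN iffD2, OF \<open>subspace L\<close>] linear_inj_on_iff_eq_0[OF f \<open>subspace L\<close>]
    using inj by blast
  ultimately show ?thesis
    unfolding Gr_def using dim_image_eq[OF f] linear_subspace_image[OF f] by simp
qed

lemma Sigma_illI:
  fixes K L :: "'a::euclidean_space set"
  assumes K: "regular_cone K" and L: "L \<in> Gr m" and disj: "L \<inter> interior K = {}"
    and x: "x \<in> L" "x \<noteq> 0" "x \<in> K"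
  shows "L \<in> Sigma_ill K m"
proof -
  have "subspace L" "convex K" "interior K \<noteq> {}" using K L by (auto simp: regular_cone_def Gr_def)
  then obtain a where "a \<noteq> 0" "a \<in> orth_comp L" "a \<in> dual_cone K"
    using subspace_disjoint_interior_imp_dual_cone disj by metis
  then show ?thesis using L x unfolding Sigma_ill_def by blast
qed

section \<open>Paths of subspaces\<close>

lemma connected_closedin_diff_openin_nonempty:
  assumes "connected S" "openin (top_of_set S) U" "closedin (top_of_set S) T"
    and "U \<subseteq> T" "T \<noteq> {}" "U \<noteq> S"
  shows "T - U \<noteq> {}"
proof
  assume "T - U = {}"
  with assms(4) have "U = T" by blast
  with assms show False unfolding connected_clopen by blast
qed

lemma closed_path_meets_cone:
  fixes P :: "real \<Rightarrow> 'a::euclidean_space \<Rightarrow> 'a"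
  assumes lin: "\<And>t. linear (P t)" and cont: "continuous_on ({0..1} \<times> UNIV) (\<lambda>p. P (fst p) (snd p))"
    and L: "subspace L" and K: "closed K" "cone K"
  shows "closed {t \<in> {0..1}. \<exists>x\<in>L. x \<noteq> 0 \<and> P t x \<in> K}"
proof -
  define D where "D = {0..1::real} \<times> (L \<inter> sphere (0::'a) 1)"
  define C where "C = D \<inter> (\<lambda>p. P (fst p) (snd p)) -` K"
  have "compact (L \<inter> sphere (0::'a) 1)" by (rule closed_Int_compact[OF closed_subspace[OF L] compact_sphere])
  then have D: "compact D" unfolding D_def by (rule compact_Times[OF compact_Icc])
  have "continuous_on D (\<lambda>p. P (fst p) (snd p))" by (rule continuous_on_subset[OF cont]) (auto simp: D_def)
  then have "closed C" unfolding C_def using compact_imp_closed[OF D] K(1) by (rule continuous_closed_preimage)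
  moreover have "D \<inter> C = C" by (auto simp: C_def)
  ultimately have "compact C" using compact_Int_closed[OF D] by metis
  then have "closed (fst ` C)" by (intro compact_imp_closed compact_continuous_image continuous_on_fst continuous_on_id)
  moreover have "{t \<in> {0..1}. \<exists>x\<in>L. x \<noteq> 0 \<and> P t x \<in> K} = fst ` C"
  proof (intro set_eqI iffI)
    fix t assume "t \<in> {t \<in> {0..1}. \<exists>x\<in>L. x \<noteq> 0 \<and> P t x \<in> K}"
    then obtain x where x: "t \<in> {0..1}" "x \<in> L" "x \<noteq> 0" "P t x \<in> K" by blast
    define y where "y = (1 / norm x) *\<^sub>R x"
    have "P t y \<in> K"
      using K(2) x(4) unfolding cone_def y_def linear_cmul[OF lin] by simp
    moreover have "y \<in> L \<inter> sphere 0 1" using x(2,3) subspace_scale[OF L] by (simp add: y_def)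
    ultimately have "(t, y) \<in> C" using x(1) by (simp add: C_def D_def)
    then show "t \<in> fst ` C" by force
  next
    fix t assume "t \<in> fst ` C"
    then obtain y where "(t, y) \<in> C" by force
    then have "t \<in> {0..1}" "y \<in> L" "y \<noteq> 0" "P t y \<in> K" by (auto simp: C_def D_def)
    then show "t \<in> {t \<in> {0..1}. \<exists>x\<in>L. x \<noteq> 0 \<and> P t x \<in> K}" by blast
  qed
  ultimately show ?thesis by simp
qed

lemma openin_path_meets_interior:
  fixes P :: "real \<Rightarrow> 'a::euclidean_space \<Rightarrow> 'a"
  assumes cont: "continuous_on ({0..1} \<times> UNIV) (\<lambda>p. P (fst p) (snd p))"
  shows "openin (top_of_set {0..1}) {t \<in> {0..1}. \<exists>x\<in>L. P t x \<in> interior K}"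
proof -
  have "openin (top_of_set {0..1}) ({0..1} \<inter> (\<lambda>t. P t x) -` interior K)" for x
  proof (rule continuous_openin_preimage_gen[OF _ open_interior])
    have "continuous_on {0..1} (\<lambda>t. (t, x))" by (intro continuous_intros)
    moreover have "(\<lambda>t. (t, x)) ` {0..1} \<subseteq> {0..1} \<times> UNIV" by auto
    ultimately have "continuous_on {0..1} (\<lambda>t. (\<lambda>p. P (fst p) (snd p)) ((\<lambda>t. (t, x)) t))"
      by (rule continuous_on_compose2[OF cont])
    then show "continuous_on {0..1} (\<lambda>t. P t x)" by simp
  qed
  then have "openin (top_of_set {0..1}) (\<Union>x\<in>L. {0..1} \<inter> (\<lambda>t. P t x) -` interior K)" by blast
  moreover have "(\<Union>x\<in>L. {0..1} \<inter> (\<lambda>t. P t x) -` interior K) = {t \<in> {0..1}. \<exists>x\<in>L. P t x \<in> interior K}"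
    by blast
  ultimately show ?thesis by simp
qed

lemma path_of_subspaces_touches_cone:
  fixes P :: "real \<Rightarrow> 'a::euclidean_space \<Rightarrow> 'a"
  assumes lin: "\<And>t. linear (P t)" and cont: "continuous_on ({0..1} \<times> UNIV) (\<lambda>p. P (fst p) (snd p))"
    and L: "subspace L" and K: "closed K" "cone K" "0 \<notin> interior K"
    and meets: "a \<in> {0..1}" "x \<in> L" "x \<noteq> 0" "P a x \<in> K"
    and misses: "b \<in> {0..1}" "\<And>x. x \<in> L \<Longrightarrow> P b x \<notin> interior K"
  obtains t where "t \<in> {0..1}" "\<And>x. x \<in> L \<Longrightarrow> P t x \<notin> interior K" "\<exists>x\<in>L. x \<noteq> 0 \<and> P t x \<in> K"
proof -
  let ?U = "{t \<in> {0..1}. \<exists>x\<in>L. P t x \<in> interior K}"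
  let ?T = "{t \<in> {0..1}. \<exists>x\<in>L. x \<noteq> 0 \<and> P t x \<in> K}"
  have UT: "?U \<subseteq> ?T"
  proof clarify
    fix t x assume "t \<in> {0..1}" "x \<in> L" "P t x \<in> interior K"
    moreover from this have "x \<noteq> 0" using K(3) linear_0[OF lin] by auto
    ultimately show "\<exists>x\<in>L. x \<noteq> 0 \<and> P t x \<in> K" using interior_subset by blast
  qed
  have T: "closedin (top_of_set {0..1}) ?T"
    by (intro closed_subset closed_path_meets_cone lin cont L K(1,2)) auto
  have "?T \<noteq> {}" using meets by auto
  moreover have "b \<notin> ?U" using misses by auto
  then have "?U \<noteq> {0..1}" using misses(1) by blast
  ultimately have "?T - ?U \<noteq> {}"
    using connected_closedin_diff_openin_nonempty[OF connected_Icc openin_path_meets_interior[OF cont] T UT]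
    by blast
  then show thesis using that by blast
qed

definition rank_one_update :: "'a::real_inner \<Rightarrow> 'a \<Rightarrow> real \<Rightarrow> 'a \<Rightarrow> 'a" where
  "rank_one_update w d t x = x + (t * (w \<bullet> x)) *\<^sub>R d"

lemma rank_one_update_0 [simp]: "rank_one_update w d 0 x = x"
  by (simp add: rank_one_update_def)

lemma linear_rank_one_update: "linear (rank_one_update w d t)"
  by (rule linearI) (simp_all add: rank_one_update_def algebra_simps inner_add_right)

lemma continuous_on_rank_one_update:
  "continuous_on S (\<lambda>p. rank_one_update w d (fst p) (snd p))"
  unfolding rank_one_update_def by (intro continuous_intros)

lemma rank_one_update_eq_0:
  assumes L: "subspace L" and "d \<notin> L" "x \<in> L" and eq: "rank_one_update w d t x = 0"
  shows "x = 0"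
proof -
  define c where "c = t * (w \<bullet> x)"
  have "x = - (c *\<^sub>R d)" using eq by (simp add: rank_one_update_def c_def eq_neg_iff_add_eq_0)
  then have "c *\<^sub>R d \<in> L" using subspace_neg[OF L \<open>x \<in> L\<close>] by simp
  then have "c = 0" using subspace_scale[OF L, of "c *\<^sub>R d" "1 / c"] \<open>d \<notin> L\<close> by (cases "c = 0") simp_all
  with \<open>x = - (c *\<^sub>R d)\<close> show ?thesis by simp
qed

lemma rank_one_update_crossing_Sigma:
  fixes K L :: "'a::euclidean_space set"
  assumes K: "regular_cone K" and L: "L \<in> Gr m" and d: "d \<notin> L"
    and meets: "a \<in> {0..1}" "x \<in> L" "x \<noteq> 0" "rank_one_update w d a x \<in> K"
    and misses: "b \<in> {0..1}" "\<And>x. x \<in> L \<Longrightarrow> rank_one_update w d b x \<notin> interior K"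
  obtains t where "t \<in> {0..1}" "rank_one_update w d t ` L \<in> Sigma_ill K m"
proof -
  have "subspace L" using L by (simp add: Gr_def)
  have "closed K" "cone K" using K by (auto simp: regular_cone_def)
  obtain t where t: "t \<in> {0..1}"
    and disj: "\<And>x. x \<in> L \<Longrightarrow> rank_one_update w d t x \<notin> interior K"
    and "\<exists>x\<in>L. x \<noteq> 0 \<and> rank_one_update w d t x \<in> K"
    using path_of_subspaces_touches_cone[OF linear_rank_one_update continuous_on_rank_one_update
      \<open>subspace L\<close> \<open>closed K\<close> \<open>cone K\<close> zero_notin_interior_regular_cone[OF K] meets misses]
    by blast
  then obtain y where y: "y \<in> L" "y \<noteq> 0" "rank_one_update w d t y \<in> K" by blast
  have "rank_one_update w d t ` L \<in> Gr m"
    using rank_one_update_eq_0[OF \<open>subspace L\<close> d] by (intro linear_image_Gr[OF linear_rank_one_update L])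
  moreover have "rank_one_update w d t ` L \<inter> interior K = {}" using disj by blast
  moreover have "rank_one_update w d t y \<noteq> 0" using rank_one_update_eq_0[OF \<open>subspace L\<close> d y(1)] y(2) by blast
  ultimately have "rank_one_update w d t ` L \<in> Sigma_ill K m"
    using y by (intro Sigma_illI[OF K]) auto
  with t show thesis by (rule that)
qed

section \<open>Distances between subspaces\<close>

lemma bdd_below_norm_ratio:
  assumes "is_norm N1" "is_norm N2"
  shows "bdd_below ((\<lambda>v. N2 (f v) / N1 (g v)) ` A)"
  using assms by (intro bdd_belowI2[where m = 0]) (simp add: is_norm_nonneg)

lemma INF_le_sdist:
  fixes N1 N2 :: "'a::euclidean_space \<Rightarrow> real"
  assumes N1: "is_norm N1" and N2: "is_norm N2" and "0 \<in> L'" "x \<in> L" "x \<noteq> 0"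
  shows "(INF v\<in>L'. N2 (x - v) / N1 x) \<le> sdist N1 N2 L L'"
proof -
  obtain C where C: "0 < C" "\<And>x. N2 x \<le> C * N1 x" using is_norm_le_mult[OF N1 N2] by blast
  have "(INF v\<in>L'. N2 (y - v) / N1 y) \<le> C" if "y \<noteq> 0" for y
    using cINF_lower2[OF bdd_below_norm_ratio[OF N1 N2] \<open>0 \<in> L'\<close>] C(2)[of y] is_norm_pos[OF N1 that]
    by (simp add: field_simps)
  then have "bdd_above ((\<lambda>y. INF v\<in>L'. N2 (y - v) / N1 y) ` (L - {0}))" by (intro bdd_aboveI2) auto
  then show ?thesis unfolding sdist_def using assms(4,5) by (intro cSUP_upper) auto
qed

lemma inner_le_sdist_mult:
  fixes N1 N2 :: "'a::euclidean_space \<Rightarrow> real"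
  assumes N1: "is_norm N1" and N2: "is_norm N2"
    and u: "u \<in> orth_comp L'" "dual_norm N2 u = 1" and "0 \<in> L'" "x \<in> L"
  shows "u \<bullet> x \<le> sdist N1 N2 L L' * N1 x"
proof (cases "x = 0")
  case False
  have "u \<bullet> x / N1 x \<le> (INF v\<in>L'. N2 (x - v) / N1 x)"
  proof (rule cINF_greatest)
    fix v assume "v \<in> L'"
    then have "u \<bullet> x = u \<bullet> (x - v)" using u(1) by (simp add: orth_comp_def inner_diff_right)
    also have "\<dots> \<le> N2 (x - v)" using inner_le_dual_norm_mult[OF N2, of u "x - v"] u(2) by simp
    finally show "u \<bullet> x / N1 x \<le> N2 (x - v) / N1 x"
      using is_norm_pos[OF N1 False] by (simp add: divide_right_mono)
  qed (use \<open>0 \<in> L'\<close> in auto)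
  also have "\<dots> \<le> sdist N1 N2 L L'" by (rule INF_le_sdist[OF N1 N2 \<open>0 \<in> L'\<close> \<open>x \<in> L\<close> False])
  finally show ?thesis using is_norm_pos[OF N1 False] by (simp add: field_simps)
qed (simp add: is_norm_0[OF N1])

lemma sdist_nonneg:
  fixes N1 N2 :: "'a::euclidean_space \<Rightarrow> real"
  assumes N1: "is_norm N1" and N2: "is_norm N2" and "0 \<in> L'" "x \<in> L" "x \<noteq> 0"
  shows "0 \<le> sdist N1 N2 L L'"
proof -
  have "0 \<le> (INF v\<in>L'. N2 (x - v) / N1 x)"
    using \<open>0 \<in> L'\<close> by (intro cINF_greatest) (auto simp: is_norm_nonneg[OF N1] is_norm_nonneg[OF N2])
  also have "\<dots> \<le> sdist N1 N2 L L'" by (rule INF_le_sdist[OF assms])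
  finally show ?thesis .
qed

lemma sdist_le:
  fixes N1 N2 :: "'a::euclidean_space \<Rightarrow> real"
  assumes N1: "is_norm N1" and N2: "is_norm N2" and "x0 \<in> L" "x0 \<noteq> 0"
    and close: "\<And>x. x \<in> L \<Longrightarrow> x \<noteq> 0 \<Longrightarrow> \<exists>v\<in>L'. N2 (x - v) \<le> c * N1 x"
  shows "sdist N1 N2 L L' \<le> c"
  unfolding sdist_def
proof (rule cSUP_least)
  fix x assume "x \<in> L - {0}"
  then obtain v where v: "v \<in> L'" "N2 (x - v) \<le> c * N1 x" using close by blast
  moreover have "N2 (x - v) / N1 x \<le> c"
    using v(2) is_norm_pos[OF N1, of x] \<open>x \<in> L - {0}\<close> by (simp add: pos_divide_le_eq)
  ultimately show "(INF v\<in>L'. N2 (x - v) / N1 x) \<le> c"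
    by (intro cINF_lower2[OF bdd_below_norm_ratio[OF N1 N2]])
qed (use assms(3,4) in auto)

lemma INF_le_sdistbar:
  fixes N1 N2 :: "'a::euclidean_space \<Rightarrow> real"
  assumes N1: "is_norm N1" and N2: "is_norm N2" and L: "subspace L" "y \<in> L" "y \<noteq> 0"
    and "x \<in> L'" "x \<noteq> 0"
  shows "(INF v\<in>L - {0}. N2 (x - v) / N1 v) \<le> sdistbar N1 N2 L' L"
proof -
  obtain C where C: "0 < C" "\<And>x. N2 x \<le> C * N1 x" using is_norm_le_mult[OF N1 N2] by blast
  have "(INF v\<in>L - {0}. N2 (z - v) / N1 v) \<le> 2 * C" if "z \<noteq> 0" for z
  proof -
    define v where "v = (N1 z / N1 y) *\<^sub>R y"
    have Nv: "N1 v = N1 z"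
      using is_norm_pos[OF N1 L(3)] is_norm_nonneg[OF N1, of z] by (simp add: v_def is_norm_scaleR[OF N1])
    have "v \<in> L - {0}"
      using is_norm_pos[OF N1 that] is_norm_0[OF N1] L Nv by (auto simp: v_def subspace_scale)
    moreover have "N2 (z - v) / N1 v \<le> 2 * C"
      using is_norm_diff_le[OF N2, of z v] C(2)[of z] C(2)[of v] Nv is_norm_pos[OF N1 that]
      by (simp add: pos_divide_le_eq)
    ultimately show ?thesis by (intro cINF_lower2[OF bdd_below_norm_ratio[OF N1 N2]])
  qed
  then have "bdd_above ((\<lambda>z. INF v\<in>L - {0}. N2 (z - v) / N1 v) ` (L' - {0}))"
    by (intro bdd_aboveI2) auto
  then show ?thesis unfolding sdistbar_def using assms(6,7) by (intro cSUP_upper) auto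
qed

lemma sdistbar_le:
  fixes N1 N2 :: "'a::euclidean_space \<Rightarrow> real"
  assumes N1: "is_norm N1" and N2: "is_norm N2" and "x0 \<in> L'" "x0 \<noteq> 0"
    and close: "\<And>x. x \<in> L' \<Longrightarrow> x \<noteq> 0 \<Longrightarrow> \<exists>v\<in>L - {0}. N2 (x - v) \<le> c * N1 v"
  shows "sdistbar N1 N2 L' L \<le> c"
  unfolding sdistbar_def
proof (rule cSUP_least)
  fix x assume "x \<in> L' - {0}"
  then obtain v where v: "v \<in> L - {0}" "N2 (x - v) \<le> c * N1 v" using close by blast
  then show "(INF v\<in>L - {0}. N2 (x - v) / N1 v) \<le> c"
    using cINF_lower2[OF bdd_below_norm_ratio[OF N1 N2] v(1)] is_norm_pos[OF N1, of v]
    by (simp add: field_simps)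
qed (use assms(3,4) in auto)

lemma cINF_eq_if_approx:
  fixes f :: "'b \<Rightarrow> real"
  assumes lower: "\<And>x. x \<in> A \<Longrightarrow> a \<le> f x" and approx: "\<And>e. 0 < e \<Longrightarrow> \<exists>x\<in>A. f x \<le> a + e"
  shows "(INF x\<in>A. f x) = a"
proof (rule antisym)
  show "(INF x\<in>A. f x) \<le> a"
  proof (rule field_le_epsilon)
    fix e :: real assume "0 < e"
    then obtain x where "x \<in> A" "f x \<le> a + e" using approx by blast
    then show "(INF x\<in>A. f x) \<le> a + e" using lower by (intro cINF_lower2 bdd_belowI2) auto
  qed
  have "A \<noteq> {}" using approx[of 1] by auto
  then show "a \<le> (INF x\<in>A. f x)" using lower by (rule cINF_greatest)
qed

section \<open>The identity for \<open>dist_to_Sigma\<close>\<close>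

lemma nu_le:
  fixes N1 N2 :: "'a::euclidean_space \<Rightarrow> real"
  assumes "is_norm N1" "u \<in> dual_cone K" "y \<in> orth_comp L" "dual_norm N2 u = 1"
  shows "nu N1 N2 K L \<le> dual_norm N1 (y - u)"
  unfolding nu_def using assms dual_norm_nonneg[OF assms(1)]
  by (intro cInf_lower bdd_belowI[of _ 0]) auto

lemma nu_approx:
  fixes N1 N2 :: "'a::euclidean_space \<Rightarrow> real"
  assumes K: "regular_cone K" and N2: "is_norm N2" and "0 < e"
  obtains u y where "u \<in> dual_cone K" "y \<in> orth_comp L" "dual_norm N2 u = 1"
    "dual_norm N1 (y - u) < nu N1 N2 K L + e"
proof -
  obtain a where a: "a \<noteq> 0" "a \<in> dual_cone K" using dual_cone_nontrivial[OF K] by blast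
  have "(1 / dual_norm N2 a) *\<^sub>R a \<in> dual_cone K"
    using a dual_norm_pos[OF N2 a(1)] by (auto simp: dual_cone_def)
  moreover have "(0::'a) \<in> orth_comp L" by (simp add: orth_comp_def)
  ultimately have "{dual_norm N1 (y - u) | u y. u \<in> dual_cone K \<and> y \<in> orth_comp L \<and> dual_norm N2 u = 1} \<noteq> {}"
    using dual_norm_normalize[OF N2 a(1)] by blast
  from cInf_lessD[OF this, of "nu N1 N2 K L + e"] show thesis
    using \<open>0 < e\<close> that unfolding nu_def by auto
qed

lemma nu_le_sdist:
  fixes K L L' :: "'a::euclidean_space set" and N1 N2 :: "'a \<Rightarrow> real"
  assumes N1: "is_norm N1" and N2: "is_norm N2" and L: "L \<in> Gr m" "1 \<le> m" and L': "L' \<in> Sigma_ill K m"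
  shows "nu N1 N2 K L \<le> sdist N1 N2 L L'"
proof -
  obtain u0 where u0: "u0 \<in> orth_comp L'" "u0 \<in> dual_cone K" "u0 \<noteq> 0"
    using L' by (auto simp: Sigma_ill_def orth_comp_def dual_cone_def)
  define u where "u = (1 / dual_norm N2 u0) *\<^sub>R u0"
  have u: "u \<in> orth_comp L'" "u \<in> dual_cone K" "dual_norm N2 u = 1"
    using u0 dual_norm_pos[OF N2 u0(3)] dual_norm_normalize[OF N2 u0(3)]
    by (auto simp: u_def orth_comp_def dual_cone_def)
  have "0 \<in> L'" using L' by (auto simp: Sigma_ill_def Gr_def subspace_0)
  define s where "s = sdist N1 N2 L L'"
  obtain x0 where "x0 \<in> L" "x0 \<noteq> 0" using Gr_obtain_nonzero[OF L] .
  then have "0 \<le> s" unfolding s_def by (rule sdist_nonneg[OF N1 N2 \<open>0 \<in> L'\<close>])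
  moreover have "subspace L" using L by (simp add: Gr_def)
  moreover have "u \<bullet> x \<le> s * N1 x" if "x \<in> L" for x
    unfolding s_def by (rule inner_le_sdist_mult[OF N1 N2 u(1,3) \<open>0 \<in> L'\<close> that])
  ultimately obtain w where w: "\<And>x. x \<in> L \<Longrightarrow> w \<bullet> x = u \<bullet> x" "\<And>x. w \<bullet> x \<le> s * N1 x"
    using hahn_banach_is_norm[OF _ N1] by metis
  have "u - w \<in> orth_comp L" using w(1) by (simp add: orth_comp_def inner_diff_left)
  then have "nu N1 N2 K L \<le> dual_norm N1 ((u - w) - u)" by (rule nu_le[OF N1 u(2) _ u(3)])
  also have "\<dots> \<le> s"
  proof (rule dual_norm_le[OF N1])
    fix x assume "N1 x = 1"
    then show "((u - w) - u) \<bullet> x \<le> s" using w(2)[of "- x"] by (simp add: is_norm_minus[OF N1])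
  qed
  finally show ?thesis unfolding s_def .
qed

lemma exists_Sigma_sdist_le:
  fixes K L :: "'a::euclidean_space set" and N1 N2 :: "'a \<Rightarrow> real"
  assumes K: "regular_cone K" and N1: "is_norm N1" and N2: "is_norm N2"
    and L: "L \<in> Gr m" "m < DIM('a)" and start: "L \<inter> interior K \<noteq> {}"
    and u: "u \<in> dual_cone K" "dual_norm N2 u = 1" and y: "y \<in> orth_comp L" and "0 < e"
  obtains L' where "L' \<in> Sigma_ill K m" "sdist N1 N2 L L' \<le> dual_norm N1 (y - u) * (1 + e)"
proof -
  have "subspace L" "dim L < DIM('a)" using L by (auto simp: Gr_def)
  obtain z where z: "u \<bullet> z = 1" "N2 z \<le> 1 + e" "z \<notin> L"
    using exists_level_vector_outside[OF N2 u(2) \<open>subspace L\<close> \<open>dim L < DIM('a)\<close> \<open>0 < e\<close>] by blast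
  have "- z \<notin> L" using z(3) subspace_neg[OF \<open>subspace L\<close>] by force
  have "u \<noteq> 0" using u(2) dual_norm_0[OF N2] by auto
  obtain x0 where x0: "x0 \<in> L" "x0 \<in> interior K" using start by blast
  then have "x0 \<noteq> 0" "x0 \<in> K" using zero_notin_interior_regular_cone[OF K] interior_subset by auto
  moreover have "rank_one_update u (- z) 1 x \<notin> interior K" for x
  proof
    assume "rank_one_update u (- z) 1 x \<in> interior K"
    then have "0 < u \<bullet> rank_one_update u (- z) 1 x"
      using u(1) \<open>u \<noteq> 0\<close> by (intro inner_pos_interior[of K]) (auto simp: dual_cone_def)
    then show False using z(1) by (simp add: rank_one_update_def inner_add_right inner_diff_right)
  qed
  ultimately obtain t where t: "t \<in> {0..1}" and Sigma: "rank_one_update u (- z) t ` L \<in> Sigma_ill K m"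
    using rank_one_update_crossing_Sigma[OF K L(1) \<open>- z \<notin> L\<close>, where a = 0 and b = 1 and x = x0 and w = u] x0(1)
    by auto
  have "sdist N1 N2 L (rank_one_update u (- z) t ` L) \<le> dual_norm N1 (y - u) * (1 + e)"
  proof (rule sdist_le[OF N1 N2 x0(1) \<open>x0 \<noteq> 0\<close>])
    fix x assume "x \<in> L"
    have "N2 (x - rank_one_update u (- z) t x) = \<bar>t\<bar> * \<bar>u \<bullet> x\<bar> * N2 z"
      by (simp add: rank_one_update_def is_norm_scaleR[OF N2] abs_mult)
    also have "\<dots> \<le> 1 * (dual_norm N1 (y - u) * N1 x) * (1 + e)"
      using t z(2) abs_inner_le_dual_norm_orth[OF N1 \<open>subspace L\<close> y \<open>x \<in> L\<close>]
      by (intro mult_mono) (auto simp: is_norm_nonneg[OF N1] is_norm_nonneg[OF N2] dual_norm_nonneg[OF N1])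
    finally show "\<exists>v\<in>rank_one_update u (- z) t ` L. N2 (x - v) \<le> dual_norm N1 (y - u) * (1 + e) * N1 x"
      using \<open>x \<in> L\<close> by (auto simp: algebra_simps)
  qed
  with Sigma show thesis by (rule that)
qed

lemma dist_to_Sigma_eq_nu:
  fixes K L :: "'a::euclidean_space set" and N1 N2 :: "'a \<Rightarrow> real"
  assumes K: "regular_cone K" and N1: "is_norm N1" and N2: "is_norm N2"
    and L: "L \<in> Gr m" "1 \<le> m" "m < DIM('a)" and start: "L \<inter> interior K \<noteq> {}"
  shows "dist_to_Sigma N1 N2 K m L = nu N1 N2 K L"
  unfolding dist_to_Sigma_def
proof (rule cINF_eq_if_approx)
  show "nu N1 N2 K L \<le> sdist N1 N2 L L'" if "L' \<in> Sigma_ill K m" for L'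
    by (rule nu_le_sdist[OF N1 N2 L(1,2) that])
  fix e :: real assume "0 < e"
  then have "0 < e / 2" by simp
  then obtain u y where uy: "u \<in> dual_cone K" "y \<in> orth_comp L" "dual_norm N2 u = 1"
    and "dual_norm N1 (y - u) < nu N1 N2 K L + e / 2"
    using nu_approx[OF K N2] by blast
  moreover define D where "D = dual_norm N1 (y - u)"
  ultimately have D: "0 \<le> D" "D < nu N1 N2 K L + e / 2" using dual_norm_nonneg[OF N1] by auto
  obtain L' where "L' \<in> Sigma_ill K m" and L': "sdist N1 N2 L L' \<le> D * (1 + e / (2 * (D + 1)))"
    using exists_Sigma_sdist_le[OF K N1 N2 L(1,3) start uy(1,3,2), of "e / (2 * (D + 1))"] \<open>0 < e\<close> D(1)
    unfolding D_def by auto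
  moreover have "D * (e / (2 * (D + 1))) \<le> e / 2" using D(1) \<open>0 < e\<close> by (simp add: field_simps)
  then have "D * (1 + e / (2 * (D + 1))) \<le> nu N1 N2 K L + e"
    unfolding distrib_left mult_1_right using D(2) by linarith
  ultimately show "\<exists>L'\<in>Sigma_ill K m. sdist N1 N2 L L' \<le> nu N1 N2 K L + e"
    by (meson order_trans)
qed

section \<open>The identity for \<open>distbar_from_Sigma\<close>\<close>

lemma nubar_le:
  fixes N1 N2 :: "'a::euclidean_space \<Rightarrow> real"
  assumes "is_norm N2" "v \<in> K" "x \<in> L" "N1 x = 1"
  shows "nubar N1 N2 K L \<le> N2 (v - x)"
  unfolding nubar_def using assms is_norm_nonneg[OF assms(1)]
  by (intro cInf_lower bdd_belowI[of _ 0]) auto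

lemma nubar_approx:
  fixes N1 N2 :: "'a::euclidean_space \<Rightarrow> real"
  assumes N1: "is_norm N1" and "0 \<in> K" "x0 \<in> L" "x0 \<noteq> 0" "subspace L" "0 < e"
  obtains v x where "v \<in> K" "x \<in> L" "N1 x = 1" "N2 (v - x) < nubar N1 N2 K L + e"
proof -
  have "(1 / N1 x0) *\<^sub>R x0 \<in> L" "N1 ((1 / N1 x0) *\<^sub>R x0) = 1"
    using assms subspace_scale is_norm_normalize[OF N1] by auto
  then have "{N2 (v - x) | v x. v \<in> K \<and> x \<in> L \<and> N1 x = 1} \<noteq> {}" using \<open>0 \<in> K\<close> by blast
  from cInf_lessD[OF this, of "nubar N1 N2 K L + e"] show thesis
    using \<open>0 < e\<close> that unfolding nubar_def by auto
qed

lemma nubar_le_sdistbar: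
  fixes K L L' :: "'a::euclidean_space set" and N1 N2 :: "'a \<Rightarrow> real"
  assumes K: "cone K" "0 \<in> K" and N1: "is_norm N1" and N2: "is_norm N2"
    and L: "L \<in> Gr m" "1 \<le> m" and L': "L' \<in> Sigma_ill K m"
  shows "nubar N1 N2 K L \<le> sdistbar N1 N2 L' L"
proof -
  have "subspace L" "subspace L'" using L L' by (auto simp: Gr_def Sigma_ill_def)
  obtain w where w: "w \<in> L'" "w \<in> K" "w \<noteq> 0"
    using L' subspace_0[OF \<open>subspace L'\<close>] K(2) by (auto simp: Sigma_ill_def)
  obtain x0 where x0: "x0 \<in> L" "x0 \<noteq> 0" using Gr_obtain_nonzero[OF L] .
  have "nubar N1 N2 K L \<le> (INF v\<in>L - {0}. N2 (w - v) / N1 v)"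
  proof (rule cINF_greatest)
    fix v assume v: "v \<in> L - {0}"
    have pos: "0 < N1 v" using v is_norm_pos[OF N1] by auto
    have "nubar N1 N2 K L \<le> N2 ((1 / N1 v) *\<^sub>R w - (1 / N1 v) *\<^sub>R v)"
      using v w(2) K(1) pos is_norm_normalize[OF N1, of v] subspace_scale[OF \<open>subspace L\<close>]
      by (intro nubar_le[OF N2]) (auto simp: cone_def)
    also have "\<dots> = N2 (w - v) / N1 v"
      using pos by (simp add: is_norm_scaleR[OF N2] flip: scaleR_diff_right)
    finally show "nubar N1 N2 K L \<le> N2 (w - v) / N1 v" .
  qed (use x0 in auto)
  also have "\<dots> \<le> sdistbar N1 N2 L' L" by (rule INF_le_sdistbar[OF N1 N2 \<open>subspace L\<close> x0 w(1,3)])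
  finally show ?thesis .
qed

lemma exists_Sigma_sdistbar_le:
  fixes K L :: "'a::euclidean_space set" and N1 N2 :: "'a \<Rightarrow> real"
  assumes K: "regular_cone K" and N1: "is_norm N1" and N2: "is_norm N2"
    and L: "L \<in> Gr m" and start: "orth_comp L \<inter> interior (dual_cone K) \<noteq> {}"
    and vx: "v \<in> K" "x0 \<in> L" "N1 x0 = 1" and "0 < e"
  obtains L' where "L' \<in> Sigma_ill K m" "sdistbar N1 N2 L' L \<le> N2 (v - x0) + e"
proof -
  have "subspace L" using L by (simp add: Gr_def)
  have Kc: "convex K" "cone K" "K \<inter> uminus ` K = {0}" "interior K \<noteq> {}"
    using K by (auto simp: regular_cone_def)
  have LK: "x = 0" if "x \<in> L" "x \<in> K" for x
    using start inter_cone_trivial_if_orth_meets_interior_dual that by blast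
  obtain k where "k \<in> interior K" using Kc(4) by blast
  then have k: "k \<in> K" "k \<noteq> 0" using interior_subset zero_notin_interior_regular_cone[OF K] by auto
  define \<eta> where "\<eta> = e / (N2 k + 1)"
  have \<eta>: "0 < \<eta>" "\<eta> * N2 k \<le> e" using \<open>0 < e\<close> is_norm_nonneg[OF N2, of k] by (auto simp: \<eta>_def field_simps)
  \<comment> \<open>\<open>v\<close> may be \<open>0\<close>; pushing it into \<open>K - {0}\<close> puts it outside \<open>L\<close>, as \<open>L \<inter> K = {0}\<close>.\<close>
  define v1 where "v1 = v + \<eta> *\<^sub>R k"
  have "\<eta> *\<^sub>R k \<in> K" using k(1) Kc(2) \<eta>(1) by (simp add: cone_def)
  then have "v1 \<in> K" using convex_cone[of K] Kc(1,2) vx(1) unfolding v1_def by blast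
  moreover have "v1 \<noteq> 0"
  proof
    assume "v1 = 0"
    then have "\<eta> *\<^sub>R k \<in> K \<inter> uminus ` K" using vx(1) \<open>\<eta> *\<^sub>R k \<in> K\<close>
      by (auto simp: v1_def add_eq_0_iff intro!: image_eqI[of _ _ v])
    then show False using Kc(3) \<eta>(1) k(2) by auto
  qed
  ultimately have "v1 \<notin> L" using LK by blast
  define d where "d = v1 - x0"
  have "d \<notin> L" using \<open>v1 \<notin> L\<close> vx(2) subspace_add[OF \<open>subspace L\<close>] by (force simp: d_def)
  have Nd: "N2 d \<le> N2 (v - x0) + e"
    using is_norm_triangle[OF N2, of "v - x0" "\<eta> *\<^sub>R k"] \<eta>
    by (simp add: d_def v1_def is_norm_scaleR[OF N2] algebra_simps)
  obtain w where w: "w \<bullet> x0 = 1" "\<And>x. \<bar>w \<bullet> x\<bar> \<le> N1 x" using exists_norming_functional[OF N1 vx(3)] by blast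
  have "x0 \<noteq> 0" using vx(3) is_norm_0[OF N1] by auto
  moreover have "rank_one_update w d 1 x0 \<in> K" using w(1) \<open>v1 \<in> K\<close> by (simp add: rank_one_update_def d_def)
  moreover have "rank_one_update w d 0 x \<notin> interior K" if "x \<in> L" for x
    using LK[OF that] interior_subset zero_notin_interior_regular_cone[OF K] by auto
  ultimately obtain t where t: "t \<in> {0..1}" and Sigma: "rank_one_update w d t ` L \<in> Sigma_ill K m"
    using rank_one_update_crossing_Sigma[OF K L \<open>d \<notin> L\<close>, where a = 1 and b = 0 and x = x0 and w = w] vx(2)
    by auto
  have "sdistbar N1 N2 (rank_one_update w d t ` L) L \<le> N2 (v - x0) + e"
  proof (rule sdistbar_le[OF N1 N2])
    show "rank_one_update w d t x0 \<in> rank_one_update w d t ` L" using vx(2) by blast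
    show "rank_one_update w d t x0 \<noteq> 0"
      using rank_one_update_eq_0[OF \<open>subspace L\<close> \<open>d \<notin> L\<close> vx(2)] \<open>x0 \<noteq> 0\<close> by blast
    fix y assume "y \<in> rank_one_update w d t ` L" "y \<noteq> 0"
    then obtain x where x: "x \<in> L" "y = rank_one_update w d t x" by blast
    with \<open>y \<noteq> 0\<close> have "x \<noteq> 0" by (auto simp: rank_one_update_def)
    have "N2 (y - x) = \<bar>t\<bar> * \<bar>w \<bullet> x\<bar> * N2 d"
      by (simp add: x(2) rank_one_update_def is_norm_scaleR[OF N2] abs_mult)
    also have "\<dots> \<le> 1 * N1 x * (N2 (v - x0) + e)"
      using t w(2)[of x] Nd by (intro mult_mono) (auto simp: is_norm_nonneg[OF N2])
    finally show "\<exists>x'\<in>L - {0}. N2 (y - x') \<le> (N2 (v - x0) + e) * N1 x'"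
      using x(1) \<open>x \<noteq> 0\<close> by (auto simp: algebra_simps)
  qed
  with Sigma show thesis by (rule that)
qed

lemma distbar_from_Sigma_eq_nubar:
  fixes K L :: "'a::euclidean_space set" and N1 N2 :: "'a \<Rightarrow> real"
  assumes K: "regular_cone K" and N1: "is_norm N1" and N2: "is_norm N2"
    and L: "L \<in> Gr m" "1 \<le> m" and start: "orth_comp L \<inter> interior (dual_cone K) \<noteq> {}"
  shows "distbar_from_Sigma N1 N2 K m L = nubar N1 N2 K L"
  unfolding distbar_from_Sigma_def
proof (rule cINF_eq_if_approx)
  have "cone K" "0 \<in> K" using K zero_mem_regular_cone[OF K] by (auto simp: regular_cone_def)
  then show "nubar N1 N2 K L \<le> sdistbar N1 N2 L' L" if "L' \<in> Sigma_ill K m" for L'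
    using nubar_le_sdistbar[OF _ _ N1 N2 L that] by blast
  fix e :: real assume "0 < e"
  then have "0 < e / 2" by simp
  obtain x0 where "x0 \<in> L" "x0 \<noteq> 0" using Gr_obtain_nonzero[OF L] .
  moreover have "subspace L" using L by (simp add: Gr_def)
  ultimately obtain v x where vx: "v \<in> K" "x \<in> L" "N1 x = 1" "N2 (v - x) < nubar N1 N2 K L + e / 2"
    using nubar_approx[OF N1 \<open>0 \<in> K\<close> _ _ _ \<open>0 < e / 2\<close>] by blast
  obtain L' where "L' \<in> Sigma_ill K m" "sdistbar N1 N2 L' L \<le> N2 (v - x) + e / 2"
    using exists_Sigma_sdistbar_le[OF K N1 N2 L(1) start vx(1-3) \<open>0 < e / 2\<close>] by blast
  then show "\<exists>L'\<in>Sigma_ill K m. sdistbar N1 N2 L' L \<le> nubar N1 N2 K L + e"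
    using vx(4) by (intro bexI[of _ L']) auto
qed

theorem mainTheorem1:
  fixes K L :: "'a::euclidean_space set" and N1 N2 :: "'a \<Rightarrow> real" and m :: nat
  assumes "regular_cone K"
    and "is_norm N1" and "is_norm N2"
    and "1 \<le> m" and "m < DIM('a)"
    and "L \<in> Gr m"
  shows "(L \<inter> interior K \<noteq> {} \<longrightarrow> dist_to_Sigma N1 N2 K m L = nu N1 N2 K L)
       \<and> (orth_comp L \<inter> interior (dual_cone K) \<noteq> {} \<longrightarrow> distbar_from_Sigma N1 N2 K m L = nubar N1 N2 K L)"
  using dist_to_Sigma_eq_nu[OF assms(1-3,6,4,5)] distbar_from_Sigma_eq_nubar[OF assms(1-3,6,4)] by blast

end
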